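(* Let $n\geq1$ and $m=2^{n+1}-1$. Let $e_1,e_3,\dots,e_{2^n-1}\in\mathrm K(n)^*(\mathrm{SO}_m)$ be the generators of $\mathrm K(n)^*(\mathrm{SO}_m)=\mathbb F_2[v_n^{\pm1}][e_1,e_3,\dots,e_{2^n-1}]/(e_{2i-1}^{2^{k_i}})$, $k_i=\lfloor\log_2\frac{2^{n+1}-2}{2i-1}\rfloor$, with co-multiplication as in Theorem 3.1, and let $\alpha_{2^n-1}\in\mathrm K(n)^*(\mathrm{SO}_m)^\vee$ be the element of the basis dual to the monomial basis $\{\prod_i e_{2i-1}^{t_i}:0\le t_i<2^{k_i}\}$ corresponding to $e_{2^n-1}$. Then the only idempotents of the algebra $\mathrm K(n)^*(\mathrm{SO}_m)^\vee$ other than $0$ and $1$ are $v_n^{-1}\alpha_{2^n-1}$ and $1-v_n^{-1}\alpha_{2^n-1}$.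
   Context: Base field of characteristic $0$, prime $2$. $\mathrm K(n)^*=\Omega^*\otimes_{\mathbb L}\mathbb F_2[v_n^{\pm1}]$ algebraic Morava K-theory; $\mathrm K(n)^*(\mathrm{SO}_m)$ is a Hopf algebra over $\mathbb F_2[v_n^{\pm1}]$, free of finite rank, with co-multiplication induced by the multiplication of the split group $\mathrm{SO}_m$; $\mathrm K(n)^*(\mathrm{SO}_m)^\vee=\mathrm{Hom}_{\mathbb F_2[v_n^{\pm1}]}(\mathrm K(n)^*(\mathrm{SO}_m),\mathbb F_2[v_n^{\pm1}])$ with multiplication dual to the co-multiplication. Theorem 3.1: $\widetilde\Delta(e_{2^n-1})=v_ne_{2^n-1}\otimes e_{2^n-1}$ and, with $\langle t\rangle=2^n-1-t$, $e_{2^dj}:=e_j^{2^d}$, $\widetilde\Delta(e_{\langle 2k\rangle})=\sum_{i=0}^{\nu_2(k)}v_n^{i+1}e_{\langle k/2^i\rangle}\otimes e_{\langle k/2^i\rangle}\prod_{j<i}(e_{\langle k/2^j\rangle}\otimes1+1\otimes e_{\langle k/2^j\rangle})$ for $1\le k\le2^{n-1}-1$. *)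

theory Defs
  imports Complex_Main "HOL-Library.Poly_Mapping" "HOL-Library.Z2"
    "HOL-Computational_Algebra.Primes"
begin

section \<open>Coefficient ring F_2[v_n, v_n^-1] as the group algebra F_2[Z]\<close>

type_synonym coef = "int \<Rightarrow>\<^sub>0 bit"

definition vn :: coef where "vn = Poly_Mapping.single 1 1"
definition vn_inv :: coef where "vn_inv = Poly_Mapping.single (-1) 1"

section \<open>Truncated polynomial algebras R[x_i : i in I]/(x_i^(B i))\<close>

text \<open>An element is given by its coefficients on the monomial basis;
  a monomial is an exponent vector t with t i < B i on I and t i = 0 off I.\<close>

type_synonym 'i elt = "('i \<Rightarrow> nat) \<Rightarrow> coef"

definition monset :: "'i set \<Rightarrow> ('i \<Rightarrow> nat) \<Rightarrow> ('i \<Rightarrow> nat) set" where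
  "monset I B = {t. (\<forall>i\<in>I. t i < B i) \<and> (\<forall>i. i \<notin> I \<longrightarrow> t i = 0)}"

definition tmul :: "'i set \<Rightarrow> ('i \<Rightarrow> nat) \<Rightarrow> 'i elt \<Rightarrow> 'i elt \<Rightarrow> 'i elt" where
  "tmul I B p q = (\<lambda>t. if t \<in> monset I B then
     (\<Sum>(a,b) \<in> {(a,b). a \<in> monset I B \<and> b \<in> monset I B \<and> (\<lambda>i. a i + b i) = t}. p a * q b)
     else 0)"

definition tone :: "'i set \<Rightarrow> ('i \<Rightarrow> nat) \<Rightarrow> 'i elt" where
  "tone I B = (\<lambda>t. if t = (\<lambda>_. 0) \<and> t \<in> monset I B then 1 else 0)"

definition tadd :: "'i elt \<Rightarrow> 'i elt \<Rightarrow> 'i elt" where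
  "tadd p q = (\<lambda>t. p t + q t)"

definition tsmul :: "coef \<Rightarrow> 'i elt \<Rightarrow> 'i elt" where
  "tsmul c p = (\<lambda>t. c * p t)"

definition tvar :: "'i set \<Rightarrow> ('i \<Rightarrow> nat) \<Rightarrow> 'i \<Rightarrow> 'i elt" where
  "tvar I B i = (\<lambda>t. if t = (\<lambda>j. if j = i then 1 else 0) \<and> t \<in> monset I B then 1 else 0)"

primrec tpow :: "'i set \<Rightarrow> ('i \<Rightarrow> nat) \<Rightarrow> 'i elt \<Rightarrow> nat \<Rightarrow> 'i elt" where
  "tpow I B p 0 = tone I B"
| "tpow I B p (Suc k) = tmul I B p (tpow I B p k)"

definition tprod_list :: "'i set \<Rightarrow> ('i \<Rightarrow> nat) \<Rightarrow> 'i elt list \<Rightarrow> 'i elt" where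
  "tprod_list I B ps = foldr (tmul I B) ps (tone I B)"

definition tsum_list :: "'i elt list \<Rightarrow> 'i elt" where
  "tsum_list ps = foldr tadd ps (\<lambda>_. 0)"

text \<open>Generators e_j, j odd, 1 \<le> j \<le> 2^n - 1, with e_j^(2^(k_j)) = 0,
  k_j = floor(log_2((2^(n+1)-2)/j)).\<close>

definition gens :: "nat \<Rightarrow> nat set" where
  "gens n = {j. odd j \<and> j < 2 ^ n}"

definition kexp :: "nat \<Rightarrow> nat \<Rightarrow> nat" where
  "kexp n j = nat \<lfloor>log 2 (real (2 ^ (n + 1) - 2) / real j)\<rfloor>"

definition bnd :: "nat \<Rightarrow> nat \<Rightarrow> nat" where
  "bnd n j = 2 ^ kexp n j"

definition MonA :: "nat \<Rightarrow> (nat \<Rightarrow> nat) set" where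
  "MonA n = monset (gens n) (bnd n)"

text \<open>The tensor square A \<otimes> A is the truncated algebra in variables
  (False, j) = e_j \<otimes> 1 and (True, j) = 1 \<otimes> e_j.\<close>

definition I2 :: "nat \<Rightarrow> (bool \<times> nat) set" where
  "I2 n = (UNIV :: bool set) \<times> gens n"

definition B2 :: "nat \<Rightarrow> bool \<times> nat \<Rightarrow> nat" where
  "B2 n = (\<lambda>(s, j). bnd n j)"

definition pairmon :: "(nat \<Rightarrow> nat) \<Rightarrow> (nat \<Rightarrow> nat) \<Rightarrow> (bool \<times> nat \<Rightarrow> nat)" where
  "pairmon a b = (\<lambda>(s, j). if s then b j else a j)"

text \<open>e_m for arbitrary m \<ge> 1, via e_(2^d j) = e_j^(2^d) (j odd), placed on
  the left (side = False) or right (side = True) tensor factor.\<close>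

definition Ebar :: "bool \<Rightarrow> nat \<Rightarrow> nat \<Rightarrow> (bool \<times> nat) elt" where
  "Ebar side n m = tpow (I2 n) (B2 n)
     (tvar (I2 n) (B2 n) (side, m div 2 ^ multiplicity (2::nat) m)) (2 ^ multiplicity (2::nat) m)"

definition ang :: "nat \<Rightarrow> nat \<Rightarrow> nat" where
  "ang n t = 2 ^ n - 1 - t"

text \<open>Reduced co-multiplication of generators (Theorem 3.1).\<close>

definition red_coprod :: "nat \<Rightarrow> nat \<Rightarrow> (bool \<times> nat) elt" where
  "red_coprod n j =
    (if j = 2 ^ n - 1 then
       tsmul vn (tmul (I2 n) (B2 n) (Ebar False n j) (Ebar True n j))
     else
       (let k = (2 ^ n - 1 - j) div 2 in
        tsum_list
         (map (\<lambda>i. tsmul (vn ^ (i + 1))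
                 (tmul (I2 n) (B2 n)
                   (tmul (I2 n) (B2 n) (Ebar False n (ang n (k div 2 ^ i)))
                                        (Ebar True n (ang n (k div 2 ^ i))))
                   (tprod_list (I2 n) (B2 n)
                     (map (\<lambda>l. tadd (Ebar False n (ang n (k div 2 ^ l)))
                                     (Ebar True n (ang n (k div 2 ^ l))))
                          [0..<i]))))
              [0..<multiplicity (2::nat) k + 1])))"

definition coprod_gen :: "nat \<Rightarrow> nat \<Rightarrow> (bool \<times> nat) elt" where
  "coprod_gen n j = tadd (tadd (Ebar False n j) (Ebar True n j)) (red_coprod n j)"

text \<open>Co-multiplication of a basis monomial (multiplicativity of \<Delta>).\<close>

definition coprod_mon :: "nat \<Rightarrow> (nat \<Rightarrow> nat) \<Rightarrow> (bool \<times> nat) elt" where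
  "coprod_mon n t = tprod_list (I2 n) (B2 n)
     (map (\<lambda>j. tpow (I2 n) (B2 n) (coprod_gen n j) (t j)) (filter odd [0..<2 ^ n]))"

text \<open>An R-linear form is given by its values on the monomial basis.\<close>

definition dual :: "nat \<Rightarrow> ((nat \<Rightarrow> nat) \<Rightarrow> coef) set" where
  "dual n = {f. \<forall>t. t \<notin> MonA n \<longrightarrow> f t = 0}"

definition dmul :: "nat \<Rightarrow> ((nat \<Rightarrow> nat) \<Rightarrow> coef) \<Rightarrow> ((nat \<Rightarrow> nat) \<Rightarrow> coef)
    \<Rightarrow> ((nat \<Rightarrow> nat) \<Rightarrow> coef)" where
  "dmul n f g = (\<lambda>x. if x \<in> MonA n then
     (\<Sum>a\<in>MonA n. \<Sum>b\<in>MonA n. coprod_mon n x (pairmon a b) * f a * g b) else 0)"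

text \<open>Unit of the dual = counit (augmentation, e_j \<mapsto> 0).\<close>

definition dunit :: "nat \<Rightarrow> (nat \<Rightarrow> nat) \<Rightarrow> coef" where
  "dunit n = (\<lambda>t. if t = (\<lambda>_. 0) then 1 else 0)"

text \<open>Dual basis element to the monomial e_(2^n-1).\<close>

definition alpha :: "nat \<Rightarrow> (nat \<Rightarrow> nat) \<Rightarrow> coef" where
  "alpha n = (\<lambda>t. if t = (\<lambda>i. if i = 2 ^ n - 1 then 1 else 0) then 1 else 0)"

end

theory Submission
  imports Defs "HOL-Library.FuncSet" "HOL-Library.Disjoint_Sets"
begin

text \<open>
  For a linear form \<open>f\<close>, \<open>(f \<cdot> f)(e\<^sup>x) = \<Sum>\<^sub>a\<^sub>,\<^sub>b \<Delta>(e\<^sup>x)\<^sub>a\<^sub>,\<^sub>b f(e\<^sup>a) f(e\<^sup>b)\<close>. Since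
  \<open>\<Delta>(e\<^sup>x)\<close> is symmetric, the terms for \<open>(a, b)\<close> and \<open>(b, a)\<close> cancel in characteristic 2 and only
  the diagonal coefficients \<open>\<Delta>(e\<^sup>x)\<^sub>a\<^sub>,\<^sub>a\<close> survive; by the same cancellation, taking the
  diagonal is multiplicative on symmetric tensors. By Theorem 3.1 the diagonal of \<open>\<Delta>(e\<^sub>j)\<close> is
  \<open>v\<^sub>n e\<^sub>\<sigma>\<^sub>(\<^sub>j\<^sub>) \<otimes> e\<^sub>\<sigma>\<^sub>(\<^sub>j\<^sub>)\<close> with \<open>\<sigma>(j) = (2\<^sup>n - 1 + j)/2\<close>, so
  \<open>(f \<cdot> f)(e\<^sup>x) = v\<^sub>n\<^bsup>|x|\<^esup> f(e\<^sup>y)\<^sup>2\<close> for a single monomial \<open>e\<^sup>y\<close> of degree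
  \<open>((2\<^sup>n - 1)|x| + deg e\<^sup>x)/2\<close>, which exceeds \<open>deg e\<^sup>x\<close> unless \<open>e\<^sup>x\<close> is \<open>1\<close> or \<open>e\<^sub>2\<^sub>\<^sup>n\<^sub>-\<^sub>1\<close>.
  Descending induction on the degree shows that an idempotent vanishes off these two monomials,
  and on them it takes values \<open>a = a\<^sup>2\<close> and \<open>b = v\<^sub>n b\<^sup>2\<close>, i.e. \<open>a \<in> {0, 1}\<close> and
  \<open>b \<in> {0, v\<^sub>n\<^sup>-\<^sup>1}\<close>.
\<close>

lemma coef_add_self: "(c::coef) + c = 0"
  by (rule poly_mapping_eqI) (metis add_bit_eq_xor lookup_add lookup_zero xor_self_eq)

lemma coef_minus: "- (c::coef) = c"
  using coef_add_self[of c] by (simp add: add_eq_0_iff)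

lemma coef_diff_eq_add: "(a::coef) - b = a + b"
  by (simp add: diff_conv_add_uminus coef_minus)

lemma vn_mult_vn_inv [simp]: "vn * vn_inv = 1"
  unfolding vn_def vn_inv_def by (simp add: mult_single)

lemma vn_inv_neq_0: "vn_inv \<noteq> 0"
  using vn_mult_vn_inv by (metis mult_zero_right zero_neq_one)

lemma coef_square_eq_self_iff: "(a::coef)\<^sup>2 = a \<longleftrightarrow> a = 0 \<or> a = 1"
proof -
  have "a\<^sup>2 = a \<longleftrightarrow> a * (a - 1) = 0" by (simp add: power2_eq_square right_diff_distrib)
  then show ?thesis by simp
qed

lemma vn_mult_eq_1_iff: "vn * b = 1 \<longleftrightarrow> b = vn_inv"
proof
  assume "vn * b = 1"
  moreover have "vn_inv * (vn * b) = b"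
    by (simp add: mult.assoc[symmetric] mult.commute[of vn_inv])
  ultimately show "b = vn_inv" by simp
qed simp

lemma coef_vn_square_eq_self_iff: "vn * (b::coef)\<^sup>2 = b \<longleftrightarrow> b = 0 \<or> b = vn_inv"
proof -
  have "vn * b\<^sup>2 = b \<longleftrightarrow> b * (vn * b - 1) = 0"
    by (simp add: power2_eq_square right_diff_distrib mult.left_commute[of b vn])
  then show ?thesis by (simp add: vn_mult_eq_1_iff)
qed

section \<open>Sums in characteristic 2\<close>

lemma sum_eq_sum_fixed_points:
  fixes g :: "'a \<Rightarrow> 'b::comm_monoid_add"
  assumes "finite S" and "\<And>s. s \<in> S \<Longrightarrow> h s \<in> S" and "\<And>s. s \<in> S \<Longrightarrow> h (h s) = s"
    and "\<And>s. s \<in> S \<Longrightarrow> h s \<noteq> s \<Longrightarrow> g (h s) + g s = 0"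
  shows "sum g S = sum g {s \<in> S. h s = s}"
proof -
  have "sum g {s \<in> S. h s \<noteq> s} = 0"
    by (rule sum_involution_eq_0[where h = h]) (use assms in auto)
  moreover have "sum g ({s \<in> S. h s = s} \<union> {s \<in> S. h s \<noteq> s}) =
      sum g {s \<in> S. h s = s} + sum g {s \<in> S. h s \<noteq> s}"
    by (rule sum.union_disjoint) (use assms(1) in auto)
  moreover have "{s \<in> S. h s = s} \<union> {s \<in> S. h s \<noteq> s} = S" by blast
  ultimately show ?thesis by simp
qed

lemma sum_sum_eq_sum_diagonal:
  fixes G :: "'a \<Rightarrow> 'a \<Rightarrow> 'b::comm_monoid_add"
  assumes "finite A" and "\<And>a b. G b a = G a b" and "\<And>a b. G a b + G a b = 0"
  shows "(\<Sum>a\<in>A. \<Sum>b\<in>A. G a b) = (\<Sum>a\<in>A. G a a)"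
proof -
  have swap_eq_self_iff: "prod.swap y = y \<longleftrightarrow> fst y = snd y" for y :: "'a \<times> 'a"
    by (metis prod.collapse prod.sel(1) prod.sel(2) swap_simp)
  have "(\<Sum>a\<in>A. \<Sum>b\<in>A. G a b) = (\<Sum>(a, b)\<in>A \<times> A. G a b)"
    by (rule sum.cartesian_product)
  also have "\<dots> = (\<Sum>(a, b)\<in>{y \<in> A \<times> A. prod.swap y = y}. G a b)"
    by (rule sum_eq_sum_fixed_points) (auto simp: assms)
  also have "{y \<in> A \<times> A. prod.swap y = y} = (\<lambda>a. (a, a)) ` A"
    unfolding swap_eq_self_iff by force
  also have "(\<Sum>(a, b)\<in>(\<lambda>a. (a, a)) ` A. G a b) = (\<Sum>a\<in>A. G a a)"
    by (subst sum.reindex) (auto simp: inj_on_def)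
  finally show ?thesis .
qed

definition tmonom :: "'i set \<Rightarrow> ('i \<Rightarrow> nat) \<Rightarrow> ('i \<Rightarrow> nat) \<Rightarrow> 'i elt" where
  "tmonom I B c = (\<lambda>u. if u = c \<and> c \<in> monset I B then 1 else 0)"

lemma finite_monset: assumes "finite I" shows "finite (monset I B)"
proof -
  have "monset I B \<subseteq> (\<lambda>f i. if i \<in> I then f i else 0) ` PiE I (\<lambda>i. {..<B i})"
  proof
    fix t assume t: "t \<in> monset I B"
    then have "t = (\<lambda>i. if i \<in> I then restrict t I i else 0)"
      and "restrict t I \<in> PiE I (\<lambda>i. {..<B i})"
      unfolding monset_def by auto
    then show "t \<in> (\<lambda>f i. if i \<in> I then f i else 0) ` PiE I (\<lambda>i. {..<B i})" by blast
  qed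
  moreover have "finite (PiE I (\<lambda>i. {..<B i}))" using assms by (intro finite_PiE) auto
  ultimately show ?thesis by (auto intro: finite_surj)
qed

lemma monset_addD: "(\<lambda>i. a i + b i) \<in> monset I B \<Longrightarrow> a \<in> monset I B \<and> b \<in> monset I B"
  unfolding monset_def by auto

lemma tmul_tsmul: "tmul I B (tsmul c p) (tsmul d q) = tsmul (c * d) (tmul I B p q)"
  unfolding tmul_def tsmul_def
  by (auto simp: sum_distrib_left case_prod_unfold mult_ac intro!: sum.cong)

lemma tsmul_one [simp]: "tsmul 1 p = p"
  unfolding tsmul_def by simp

lemma tsmul_zero [simp]: "tsmul c (\<lambda>_. 0) = (\<lambda>_. 0)"
  unfolding tsmul_def by simp

lemma tadd_zero_left [simp]: "tadd (\<lambda>_. 0) p = p"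
  unfolding tadd_def by simp

lemma tadd_zero_right [simp]: "tadd p (\<lambda>_. 0) = p"
  unfolding tadd_def by simp

lemma tmul_zero_right [simp]: "tmul I B p (\<lambda>_. 0) = (\<lambda>_. 0)"
  unfolding tmul_def by (auto simp: case_prod_unfold)

lemma tmul_comm: "tmul I B p q = tmul I B q p"
proof
  fix t
  let ?S = "{(a, b). a \<in> monset I B \<and> b \<in> monset I B \<and> (\<lambda>i. a i + b i) = t}"
  have "(\<Sum>(a, b)\<in>?S. p a * q b) = (\<Sum>(a, b)\<in>(\<lambda>(a, b). (b, a)) ` ?S. q a * p b)"
    by (subst sum.reindex) (auto simp: inj_on_def mult.commute intro!: sum.cong)
  also have "(\<lambda>(a, b). (b, a)) ` ?S = ?S" by (auto simp: add.commute image_iff)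
  finally show "tmul I B p q t = tmul I B q p t" unfolding tmul_def by simp
qed

lemma tmul_zero_left [simp]: "tmul I B (\<lambda>_. 0) p = (\<lambda>_. 0)"
  by (subst tmul_comm) simp

lemma tone_eq_tmonom: "tone I B = tmonom I B (\<lambda>_. 0)"
  unfolding tone_def tmonom_def by auto

lemma tvar_eq_tmonom: "tvar I B i = tmonom I B (\<lambda>j. if j = i then 1 else 0)"
  unfolding tvar_def tmonom_def by auto

lemma tmul_tmonom:
  assumes "finite I"
  shows "tmul I B (tmonom I B a) (tmonom I B b) = tmonom I B (\<lambda>i. a i + b i)"
proof
  fix t
  show "tmul I B (tmonom I B a) (tmonom I B b) t = tmonom I B (\<lambda>i. a i + b i) t"
  proof (cases "t \<in> monset I B")
    case True
    let ?S = "{(a', b'). a' \<in> monset I B \<and> b' \<in> monset I B \<and> (\<lambda>i. a' i + b' i) = t}"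
    have "finite ?S"
      by (rule finite_subset[of _ "monset I B \<times> monset I B"]) (auto simp: finite_monset[OF assms])
    moreover have "tmul I B (tmonom I B a) (tmonom I B b) t =
        (\<Sum>x\<in>?S. if x = (a, b) then (if a \<in> monset I B \<and> b \<in> monset I B then 1 else 0) else 0)"
      using True unfolding tmul_def tmonom_def by (auto intro!: sum.cong)
    ultimately show ?thesis
      unfolding tmonom_def using monset_addD[of a b I B] True by (simp add: sum.delta')
  qed (auto simp add: tmul_def tmonom_def)
qed

lemma tpow_tsmul_tmonom:
  assumes "finite I"
  shows "tpow I B (tsmul c (tmonom I B a)) k = tsmul (c ^ k) (tmonom I B (\<lambda>i. k * a i))"
  by (induction k) (simp_all add: tone_eq_tmonom tmul_tsmul tmul_tmonom[OF assms])

lemma tpow_tmonom: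
  assumes "finite I"
  shows "tpow I B (tmonom I B a) k = tmonom I B (\<lambda>i. k * a i)"
  using tpow_tsmul_tmonom[OF assms, where c = 1] by simp

lemma tprod_list_tsmul_tmonom:
  assumes "finite I"
  shows "tprod_list I B (map (\<lambda>j. tsmul (c j) (tmonom I B (a j))) js) =
         tsmul (\<Prod>j\<leftarrow>js. c j) (tmonom I B (\<lambda>i. \<Sum>j\<leftarrow>js. a j i))"
  unfolding tprod_list_def
  by (induction js) (simp_all add: tone_eq_tmonom tmul_tsmul tmul_tmonom[OF assms])

lemma tprod_list_zeros: "tprod_list I B (map (\<lambda>_. \<lambda>_. 0) xs) = (if xs = [] then tone I B else (\<lambda>_. 0))"
  unfolding tprod_list_def by (cases xs) simp_all

lemma tsum_list_Cons: "tsum_list (p # ps) = tadd p (tsum_list ps)"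
  unfolding tsum_list_def by simp

lemma tsum_list_zeros: "tsum_list (map (\<lambda>_. \<lambda>_. 0) xs) = (\<lambda>_. 0)"
  unfolding tsum_list_def by (induction xs) (simp_all add: tadd_def)

section \<open>Symmetric tensors and their diagonal\<close>

definition swap_exp :: "(bool \<times> 'i \<Rightarrow> nat) \<Rightarrow> bool \<times> 'i \<Rightarrow> nat" where
  "swap_exp u = (\<lambda>(s, j). u (\<not> s, j))"

definition dup_exp :: "('i \<Rightarrow> nat) \<Rightarrow> bool \<times> 'i \<Rightarrow> nat" where
  "dup_exp a = (\<lambda>(_, j). a j)"

definition tswap :: "(bool \<times> 'i) elt \<Rightarrow> (bool \<times> 'i) elt" where
  "tswap p = (\<lambda>u. p (swap_exp u))"

definition tsymmetric :: "(bool \<times> 'i) elt \<Rightarrow> bool" where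
  "tsymmetric p \<longleftrightarrow> tswap p = p"

definition tdiag :: "(bool \<times> 'i) elt \<Rightarrow> 'i elt" where
  "tdiag p = (\<lambda>a. p (dup_exp a))"

lemma swap_exp_swap_exp [simp]: "swap_exp (swap_exp u) = u"
  unfolding swap_exp_def by (simp add: case_prod_unfold)

lemma swap_exp_inject [simp]: "swap_exp u = swap_exp v \<longleftrightarrow> u = v"
  by (metis swap_exp_swap_exp)

lemma swap_exp_eq_iff: "swap_exp u = v \<longleftrightarrow> u = swap_exp v"
  by (metis swap_exp_swap_exp)

lemma swap_exp_add: "swap_exp (\<lambda>i. a i + b i) = (\<lambda>i. swap_exp a i + swap_exp b i)"
  unfolding swap_exp_def by (simp add: case_prod_unfold)

lemma swap_exp_zero [simp]: "swap_exp (\<lambda>_. 0) = (\<lambda>_. 0)"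
  unfolding swap_exp_def by (simp add: case_prod_unfold)

lemma dup_exp_zero [simp]: "dup_exp (\<lambda>_. 0) = (\<lambda>_. 0)"
  unfolding dup_exp_def by (simp add: case_prod_unfold)

lemma swap_exp_dup_exp [simp]: "swap_exp (dup_exp a) = dup_exp a"
  unfolding swap_exp_def dup_exp_def by (simp add: case_prod_unfold)

lemma swap_exp_eq_self_iff: "swap_exp u = u \<longleftrightarrow> (\<exists>a. u = dup_exp a)"
proof
  assume u: "swap_exp u = u"
  have "u (s, j) = u (False, j)" for s j
    using fun_cong[OF u, of "(False, j)"] by (cases s) (simp_all add: swap_exp_def)
  then have "u = dup_exp (\<lambda>j. u (False, j))"
    unfolding dup_exp_def by (auto simp: fun_eq_iff)
  then show "\<exists>a. u = dup_exp a" by blast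
qed auto

lemma dup_exp_add: "(\<lambda>i. dup_exp a i + dup_exp b i) = dup_exp (\<lambda>j. a j + b j)"
  unfolding dup_exp_def by (simp add: case_prod_unfold)

lemma dup_exp_eq_iff [simp]: "dup_exp a = dup_exp b \<longleftrightarrow> a = b"
  unfolding dup_exp_def fun_eq_iff by auto

context
  fixes I :: "'i set" and B :: "'i \<Rightarrow> nat"
begin

text \<open>The tensor square of \<open>R[x\<^sub>i : i \<in> I]/(x\<^sub>i\<^bsup>B i\<^esup>)\<close> as a truncated algebra, with
  \<open>(False, i)\<close> standing for \<open>x\<^sub>i \<otimes> 1\<close> and \<open>(True, i)\<close> for \<open>1 \<otimes> x\<^sub>i\<close>.\<close>

abbreviation sqI :: "(bool \<times> 'i) set" where "sqI \<equiv> UNIV \<times> I"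
abbreviation sqB :: "bool \<times> 'i \<Rightarrow> nat" where "sqB \<equiv> \<lambda>(_, j). B j"

lemma in_sq_monset_iff:
  "u \<in> monset sqI sqB \<longleftrightarrow> (\<forall>s j. (j \<in> I \<longrightarrow> u (s, j) < B j) \<and> (j \<notin> I \<longrightarrow> u (s, j) = 0))"
  unfolding monset_def by auto

lemma swap_exp_in_sq_monset [simp]: "swap_exp u \<in> monset sqI sqB \<longleftrightarrow> u \<in> monset sqI sqB"
  unfolding in_sq_monset_iff swap_exp_def by (simp add: all_bool_eq conj_commute)

lemma dup_exp_in_sq_monset [simp]: "dup_exp a \<in> monset sqI sqB \<longleftrightarrow> a \<in> monset I B"
  unfolding monset_def dup_exp_def by auto

lemma tswap_tmul: "tswap (tmul sqI sqB p q) = tmul sqI sqB (tswap p) (tswap q)"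
proof
  fix t
  let ?S = "\<lambda>t. {(a, b). a \<in> monset sqI sqB \<and> b \<in> monset sqI sqB \<and> (\<lambda>i. a i + b i) = t}"
  let ?h = "\<lambda>(a, b). (swap_exp a, swap_exp b)"
  have image: "?S (swap_exp t) = ?h ` ?S t"
  proof (intro set_eqI iffI)
    fix x assume x: "x \<in> ?S (swap_exp t)"
    obtain a b where ab: "x = (a, b)" by (cases x)
    have "?h x \<in> ?S t" and "x = ?h (?h x)"
      using x unfolding ab by (auto simp: swap_exp_add[symmetric])
    then show "x \<in> ?h ` ?S t" by (rule image_eqI[rotated])
  next
    fix x assume "x \<in> ?h ` ?S t"
    then obtain y where y: "y \<in> ?S t" "x = ?h y" by (rule imageE)
    obtain a b where ab: "y = (a, b)" by (cases y)
    show "x \<in> ?S (swap_exp t)" using y unfolding ab by (simp add: swap_exp_add[symmetric])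
  qed
  have "inj_on ?h (?S t)" by (auto simp: inj_on_def)
  then have "(\<Sum>(a, b)\<in>?S (swap_exp t). p a * q b) = (\<Sum>x\<in>?S t. (\<lambda>(a, b). p a * q b) (?h x))"
    unfolding image by (rule sum.reindex[unfolded comp_def])
  also have "\<dots> = (\<Sum>(a, b)\<in>?S t. p (swap_exp a) * q (swap_exp b))"
    by (rule sum.cong) auto
  finally show "tswap (tmul sqI sqB p q) t = tmul sqI sqB (tswap p) (tswap q) t"
    unfolding tswap_def tmul_def by simp
qed

lemma tswap_tmonom: "tswap (tmonom sqI sqB c) = tmonom sqI sqB (swap_exp c)"
  unfolding tswap_def tmonom_def by (simp add: swap_exp_eq_iff)

lemma tswap_tone: "tswap (tone sqI sqB) = tone sqI sqB"
  unfolding tone_eq_tmonom tswap_tmonom by simp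

lemma tswap_tpow: "tswap (tpow sqI sqB p k) = tpow sqI sqB (tswap p) k"
  by (induction k) (simp_all add: tswap_tone tswap_tmul)

lemma tsymmetric_tmul: "tsymmetric p \<Longrightarrow> tsymmetric q \<Longrightarrow> tsymmetric (tmul sqI sqB p q)"
  unfolding tsymmetric_def by (simp add: tswap_tmul)

lemma tsymmetric_tone: "tsymmetric (tone sqI sqB)"
  unfolding tsymmetric_def by (rule tswap_tone)

lemma tsymmetric_tpow: "tsymmetric p \<Longrightarrow> tsymmetric (tpow sqI sqB p k)"
  unfolding tsymmetric_def by (simp add: tswap_tpow)

lemma tsymmetric_tprod_list:
  "(\<And>p. p \<in> set ps \<Longrightarrow> tsymmetric p) \<Longrightarrow> tsymmetric (tprod_list sqI sqB ps)"
  unfolding tprod_list_def by (induction ps) (auto intro: tsymmetric_tmul tsymmetric_tone)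

lemma tsymmetric_mul_tswap: "tsymmetric (tmul sqI sqB z (tswap z))"
  unfolding tsymmetric_def tswap_tmul by (simp add: tmul_comm[of sqI sqB z] tswap_def)

lemma tdiag_tmonom_dup_exp: "tdiag (tmonom sqI sqB (dup_exp c)) = tmonom I B c"
  unfolding tdiag_def tmonom_def by simp

lemma tdiag_tone: "tdiag (tone sqI sqB) = tone I B"
  using tdiag_tmonom_dup_exp[of "\<lambda>_. 0"] by (simp add: tone_eq_tmonom)

text \<open>Off the diagonal, the terms \<open>p u q w\<close> and \<open>p (swap u) q (swap w)\<close> of a product of
  symmetric tensors coincide and cancel in characteristic 2.\<close>

lemma tdiag_tmul:
  assumes "finite I" and p: "tsymmetric p" and q: "tsymmetric q"
  shows "tdiag (tmul sqI sqB p q) = tmul I B (tdiag p) (tdiag q)"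
proof
  fix a
  show "tdiag (tmul sqI sqB p q) a = tmul I B (tdiag p) (tdiag q) a"
  proof (cases "a \<in> monset I B")
    case True
    let ?S = "{(u, w). u \<in> monset sqI sqB \<and> w \<in> monset sqI sqB \<and> (\<lambda>i. u i + w i) = dup_exp a}"
    let ?S1 = "{(b, c). b \<in> monset I B \<and> c \<in> monset I B \<and> (\<lambda>j. b j + c j) = a}"
    let ?g = "\<lambda>(u, w). p u * q w"
    let ?h = "\<lambda>(u, w). (swap_exp u, swap_exp w)"
    let ?d = "\<lambda>(b, c). (dup_exp b, dup_exp c)"
    have "finite ?S"
      by (rule finite_subset[of _ "monset sqI sqB \<times> monset sqI sqB"])
        (auto simp: finite_monset assms(1))
    moreover have "?h x \<in> ?S" if "x \<in> ?S" for x
      using that by (auto simp: swap_exp_add[symmetric])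
    moreover have "?g (?h x) = ?g x" for x
      using p q unfolding tsymmetric_def tswap_def by (auto simp: case_prod_unfold fun_eq_iff)
    ultimately have "sum ?g ?S = sum ?g {x \<in> ?S. ?h x = x}"
      by (intro sum_eq_sum_fixed_points) (auto simp: coef_add_self)
    also have "{x \<in> ?S. ?h x = x} = ?d ` ?S1"
    proof (intro set_eqI iffI)
      fix x assume x: "x \<in> {x \<in> ?S. ?h x = x}"
      obtain u w where uw: "x = (u, w)" by (cases x)
      with x have "swap_exp u = u" "swap_exp w = w" by auto
      then obtain b c where "u = dup_exp b" "w = dup_exp c" by (auto simp: swap_exp_eq_self_iff)
      with x have "x = ?d (b, c)" "(b, c) \<in> ?S1"
        unfolding uw by (auto simp: dup_exp_add)
      then show "x \<in> ?d ` ?S1" by (rule image_eqI)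
    qed (auto simp: dup_exp_add)
    also have "sum ?g (?d ` ?S1) = sum (?g \<circ> ?d) ?S1"
      by (rule sum.reindex) (auto simp: inj_on_def)
    also have "\<dots> = (\<Sum>(b, c)\<in>?S1. p (dup_exp b) * q (dup_exp c))"
      by (rule sum.cong) auto
    finally show ?thesis
      using True unfolding tdiag_def tmul_def by simp
  qed (simp add: tdiag_def tmul_def)
qed

lemma tdiag_tpow: "finite I \<Longrightarrow> tsymmetric p \<Longrightarrow> tdiag (tpow sqI sqB p k) = tpow I B (tdiag p) k"
  by (induction k) (simp_all add: tdiag_tone tdiag_tmul tsymmetric_tpow)

lemma tdiag_tprod_list:
  assumes "finite I" and "\<And>p. p \<in> set ps \<Longrightarrow> tsymmetric p"
  shows "tdiag (tprod_list sqI sqB ps) = tprod_list I B (map tdiag ps)"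
  using assms(2) unfolding tprod_list_def
proof (induction ps)
  case (Cons p ps)
  then show ?case
    using tdiag_tmul[OF assms(1), of p "foldr (tmul sqI sqB) ps (tone sqI sqB)"]
      tsymmetric_tprod_list[of ps] by (simp add: tprod_list_def)
qed (simp add: tdiag_tone)

end

lemma tswap_tadd: "tswap (tadd p q) = tadd (tswap p) (tswap q)"
  unfolding tswap_def tadd_def by simp

lemma tswap_tsmul: "tswap (tsmul c p) = tsmul c (tswap p)"
  unfolding tswap_def tsmul_def by simp

lemma tsymmetric_tadd: "tsymmetric p \<Longrightarrow> tsymmetric q \<Longrightarrow> tsymmetric (tadd p q)"
  unfolding tsymmetric_def by (simp add: tswap_tadd)

lemma tsymmetric_tsmul: "tsymmetric p \<Longrightarrow> tsymmetric (tsmul c p)"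
  unfolding tsymmetric_def by (simp add: tswap_tsmul)

lemma tsymmetric_zero: "tsymmetric (\<lambda>_. 0)"
  unfolding tsymmetric_def tswap_def by simp

lemma tsymmetric_tsum_list: "(\<And>p. p \<in> set ps \<Longrightarrow> tsymmetric p) \<Longrightarrow> tsymmetric (tsum_list ps)"
  unfolding tsum_list_def by (induction ps) (auto intro: tsymmetric_tadd tsymmetric_zero)

lemma tsymmetric_add_tswap: "tsymmetric (tadd z (tswap z))"
  unfolding tsymmetric_def tadd_def tswap_def by (simp add: add.commute)

lemma tsymmetric_swap_exp: "tsymmetric p \<Longrightarrow> p (swap_exp u) = p u"
  unfolding tsymmetric_def tswap_def by (metis)

lemma tdiag_tadd: "tdiag (tadd p q) = tadd (tdiag p) (tdiag q)"
  unfolding tdiag_def tadd_def by simp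

lemma tdiag_tsmul: "tdiag (tsmul c p) = tsmul c (tdiag p)"
  unfolding tdiag_def tsmul_def by simp

lemma tdiag_add_tswap: "tdiag (tadd z (tswap z)) = (\<lambda>_. 0)"
  unfolding tdiag_def tadd_def tswap_def by (simp add: coef_add_self)

lemma tdiag_tsum_list: "tdiag (tsum_list ps) = tsum_list (map tdiag ps)"
  unfolding tsum_list_def by (induction ps) (simp_all add: tdiag_tadd, simp add: tdiag_def)

section \<open>The diagonal of the co-multiplication\<close>

lemma finite_gens: "finite (gens n)"
  unfolding gens_def by (rule finite_subset[of _ "{..<2 ^ n}"]) auto

lemma finite_MonA: "finite (MonA n)"
  unfolding MonA_def by (rule finite_monset[OF finite_gens])

lemma finite_I2: "finite (I2 n)"
  unfolding I2_def by (simp add: finite_gens)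

lemmas tsymmetric_tmul_I2 =
  tsymmetric_tmul[where I = "gens n" and B = "bnd n" for n, folded I2_def B2_def]
lemmas tsymmetric_tpow_I2 =
  tsymmetric_tpow[where I = "gens n" and B = "bnd n" for n, folded I2_def B2_def]
lemmas tsymmetric_tprod_list_I2 =
  tsymmetric_tprod_list[where I = "gens n" and B = "bnd n" for n, folded I2_def B2_def]
lemmas tdiag_tmul_I2 =
  tdiag_tmul[where I = "gens n" and B = "bnd n" for n, OF finite_gens, folded I2_def B2_def]
lemmas tdiag_tpow_I2 =
  tdiag_tpow[where I = "gens n" and B = "bnd n" for n, OF finite_gens, folded I2_def B2_def]
lemmas tdiag_tprod_list_I2 =
  tdiag_tprod_list[where I = "gens n" and B = "bnd n" for n, OF finite_gens, folded I2_def B2_def]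

text \<open>The exponent vector of \<open>e\<^sub>m = e\<^sub>j\<^bsup>2\<^sup>d\<^esup>\<close>, where \<open>m = 2\<^sup>d j\<close> with \<open>j\<close> odd.\<close>

definition e_exp :: "nat \<Rightarrow> nat \<Rightarrow> nat" where
  "e_exp m = (\<lambda>i. if i = m div 2 ^ multiplicity 2 m then 2 ^ multiplicity 2 m else 0)"

lemma Ebar_eq_tmonom:
  "Ebar side n m = tmonom (I2 n) (B2 n) (\<lambda>(s, j). if s = side then e_exp m j else 0)"
proof -
  have "(\<lambda>i. 2 ^ multiplicity 2 m * (if i = (side, m div 2 ^ multiplicity 2 m) then 1 else 0)) =
      (\<lambda>(s, j). if s = side then e_exp m j else 0)"
    unfolding e_exp_def by (auto simp: fun_eq_iff)
  then show ?thesis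
    unfolding Ebar_def tvar_eq_tmonom tpow_tmonom[OF finite_I2] by simp
qed

lemma tswap_Ebar: "tswap (Ebar False n m) = Ebar True n m"
proof -
  have "swap_exp (\<lambda>(s, j). if s = False then e_exp m j else 0) = (\<lambda>(s, j). if s = True then e_exp m j else 0)"
    unfolding swap_exp_def by (auto simp: fun_eq_iff)
  then show ?thesis
    unfolding Ebar_eq_tmonom I2_def B2_def tswap_tmonom by simp
qed

lemma Ebar_mul_Ebar:
  "tmul (I2 n) (B2 n) (Ebar False n m) (Ebar True n m) = tmonom (I2 n) (B2 n) (dup_exp (e_exp m))"
proof -
  have "(\<lambda>i. (case i of (s, j) \<Rightarrow> if s = False then e_exp m j else 0) +
            (case i of (s, j) \<Rightarrow> if s = True then e_exp m j else 0)) = dup_exp (e_exp m)"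
    unfolding dup_exp_def by (auto simp: fun_eq_iff)
  then show ?thesis
    unfolding Ebar_eq_tmonom tmul_tmonom[OF finite_I2] by simp
qed

lemma tsymmetric_Ebar_mul_Ebar: "tsymmetric (tmul (I2 n) (B2 n) (Ebar False n m) (Ebar True n m))"
  using tsymmetric_mul_tswap[of "gens n" "bnd n" "Ebar False n m"]
  unfolding tswap_Ebar I2_def B2_def .

lemma tsymmetric_Ebar_add_Ebar: "tsymmetric (tadd (Ebar False n m) (Ebar True n m))"
  using tsymmetric_add_tswap[of "Ebar False n m"] unfolding tswap_Ebar .

lemma tdiag_Ebar_add_Ebar: "tdiag (tadd (Ebar False n m) (Ebar True n m)) = (\<lambda>_. 0)"
  using tdiag_add_tswap[of "Ebar False n m"] unfolding tswap_Ebar .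

lemma tdiag_Ebar_mul_Ebar:
  "tdiag (tmul (I2 n) (B2 n) (Ebar False n m) (Ebar True n m)) = tmonom (gens n) (bnd n) (e_exp m)"
  unfolding Ebar_mul_Ebar unfolding I2_def B2_def by (rule tdiag_tmonom_dup_exp)

lemma tdiag_Ebar_term:
  "tdiag (tmul (I2 n) (B2 n) (tmul (I2 n) (B2 n) (Ebar False n m) (Ebar True n m))
      (tprod_list (I2 n) (B2 n) (map (\<lambda>l. tadd (Ebar False n (g l)) (Ebar True n (g l))) ls)))
    = (if ls = [] then tmonom (gens n) (bnd n) (e_exp m) else (\<lambda>_. 0))"
  (is "tdiag (tmul _ _ _ ?P) = _")
proof -
  have "tsymmetric ?P"
    by (rule tsymmetric_tprod_list_I2) (auto intro: tsymmetric_Ebar_add_Ebar)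
  moreover have "tdiag ?P = tprod_list (gens n) (bnd n) (map (\<lambda>_. \<lambda>_. 0) ls)"
    by (subst tdiag_tprod_list_I2) (auto simp: tsymmetric_Ebar_add_Ebar tdiag_Ebar_add_Ebar comp_def)
  ultimately show ?thesis
    by (simp add: tdiag_tmul_I2 tsymmetric_Ebar_mul_Ebar tdiag_Ebar_mul_Ebar tprod_list_zeros
        tone_eq_tmonom tmul_tmonom[OF finite_gens])
qed

lemma tsymmetric_red_coprod: "tsymmetric (red_coprod n j)"
  unfolding red_coprod_def Let_def
  by (auto intro!: tsymmetric_tsmul tsymmetric_Ebar_mul_Ebar tsymmetric_tsum_list tsymmetric_tmul_I2
      tsymmetric_tprod_list_I2 tsymmetric_Ebar_add_Ebar)

lemma tsymmetric_coprod_gen: "tsymmetric (coprod_gen n j)"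
  unfolding coprod_gen_def by (intro tsymmetric_tadd tsymmetric_Ebar_add_Ebar tsymmetric_red_coprod)

lemma tsymmetric_coprod_mon: "tsymmetric (coprod_mon n x)"
  unfolding coprod_mon_def
  by (auto intro!: tsymmetric_tprod_list_I2 tsymmetric_tpow_I2 tsymmetric_coprod_gen)

text \<open>For \<open>j = \<langle>2k\<rangle>\<close>, the only diagonal term of \<open>\<Delta>(e\<^sub>j)\<close> is \<open>v\<^sub>n e\<^sub>\<langle>\<^sub>k\<^sub>\<rangle> \<otimes> e\<^sub>\<langle>\<^sub>k\<^sub>\<rangle>\<close>,
  i.e.\ the summand \<open>i = 0\<close> of Theorem 3.1; for odd \<open>j\<close> its index is \<open>(2\<^sup>n - 1 + j)/2\<close>.\<close>

definition sigma :: "nat \<Rightarrow> nat \<Rightarrow> nat" where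
  "sigma n j = ang n ((2 ^ n - 1 - j) div 2)"

lemma tdiag_red_coprod:
  "tdiag (red_coprod n j) = tsmul vn (tmonom (gens n) (bnd n) (e_exp (sigma n j)))"
proof (cases "j = 2 ^ n - 1")
  case True
  then show ?thesis
    by (simp add: red_coprod_def sigma_def ang_def tdiag_tsmul tdiag_Ebar_mul_Ebar)
next
  case False
  define k where "k = (2 ^ n - 1 - j) div 2"
  define T where "T i = tsmul (vn ^ (i + 1))
    (tmul (I2 n) (B2 n) (tmul (I2 n) (B2 n) (Ebar False n (ang n (k div 2 ^ i)))
                                        (Ebar True n (ang n (k div 2 ^ i))))
      (tprod_list (I2 n) (B2 n) (map (\<lambda>l. tadd (Ebar False n (ang n (k div 2 ^ l)))
                                                 (Ebar True n (ang n (k div 2 ^ l)))) [0..<i])))"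
    for i
  have "red_coprod n j = tsum_list (map T [0..<Suc (multiplicity 2 k)])"
    using False unfolding red_coprod_def Let_def T_def k_def by simp
  then have "tdiag (red_coprod n j) = tsum_list (map (tdiag \<circ> T) (0 # [Suc 0..<Suc (multiplicity 2 k)]))"
    by (simp add: tdiag_tsum_list upt_conv_Cons del: upt_Suc)
  moreover have diag_T: "tdiag (T i) = (if i = 0 then tsmul vn (tmonom (gens n) (bnd n) (e_exp (sigma n j))) else (\<lambda>_. 0))"
    for i unfolding T_def by (simp add: tdiag_tsmul tdiag_Ebar_term sigma_def k_def)
  then have "map (tdiag \<circ> T) [Suc 0..<Suc (multiplicity 2 k)] = map (\<lambda>_. \<lambda>_. 0) [Suc 0..<Suc (multiplicity 2 k)]"
    by (intro map_cong) auto
  ultimately show ?thesis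
    by (simp add: diag_T tsum_list_Cons tsum_list_zeros del: upt_Suc)
qed

lemma tdiag_coprod_gen:
  "tdiag (coprod_gen n j) = tsmul vn (tmonom (gens n) (bnd n) (e_exp (sigma n j)))"
  unfolding coprod_gen_def by (subst tdiag_tadd) (simp add: tdiag_Ebar_add_Ebar tdiag_red_coprod)

definition total_degree :: "nat \<Rightarrow> (nat \<Rightarrow> nat) \<Rightarrow> nat" where
  "total_degree n x = (\<Sum>j\<in>gens n. x j)"

definition diag_exp :: "nat \<Rightarrow> (nat \<Rightarrow> nat) \<Rightarrow> nat \<Rightarrow> nat" where
  "diag_exp n x = (\<lambda>i. \<Sum>j\<in>gens n. x j * e_exp (sigma n j) i)"

lemma set_filter_odd_upt: "set (filter odd [0..<2 ^ n]) = gens n"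
  unfolding gens_def by auto

lemma tdiag_coprod_mon:
  "tdiag (coprod_mon n x) = tsmul (vn ^ total_degree n x) (tmonom (gens n) (bnd n) (diag_exp n x))"
proof -
  let ?L = "filter odd [0..<2 ^ n]"
  have "tdiag (coprod_mon n x) =
      tprod_list (gens n) (bnd n) (map (\<lambda>j. tdiag (tpow (I2 n) (B2 n) (coprod_gen n j) (x j))) ?L)"
    unfolding coprod_mon_def
    by (subst tdiag_tprod_list_I2) (auto simp: comp_def intro!: tsymmetric_tpow_I2 tsymmetric_coprod_gen)
  also have "\<dots> = tprod_list (gens n) (bnd n)
      (map (\<lambda>j. tsmul (vn ^ x j) (tmonom (gens n) (bnd n) (\<lambda>i. x j * e_exp (sigma n j) i))) ?L)"
    by (simp add: tdiag_tpow_I2 tsymmetric_coprod_gen tdiag_coprod_gen tpow_tsmul_tmonom[OF finite_gens])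
  also have "\<dots> = tsmul (vn ^ total_degree n x) (tmonom (gens n) (bnd n) (diag_exp n x))"
    unfolding tprod_list_tsmul_tmonom[OF finite_gens] total_degree_def diag_exp_def power_sum
    by (simp only: sum.distinct_set_conv_list[symmetric] prod.distinct_set_conv_list[symmetric]
        distinct_filter distinct_upt set_filter_odd_upt)
  finally show ?thesis .
qed

lemma pairmon_self: "pairmon a a = dup_exp a"
  unfolding pairmon_def dup_exp_def by (auto simp: fun_eq_iff)

lemma coprod_mon_pairmon_swap: "coprod_mon n x (pairmon b a) = coprod_mon n x (pairmon a b)"
proof -
  have "swap_exp (pairmon a b) = pairmon b a"
    unfolding swap_exp_def pairmon_def by (auto simp: fun_eq_iff)
  then show ?thesis using tsymmetric_swap_exp[OF tsymmetric_coprod_mon, of n x "pairmon a b"] by simp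
qed

lemma dual_eq_0: "f \<in> dual n \<Longrightarrow> x \<notin> MonA n \<Longrightarrow> f x = 0"
  unfolding dual_def by simp

lemma dmul_self_apply:
  assumes f: "f \<in> dual n" and x: "x \<in> MonA n"
  shows "dmul n f f x = vn ^ total_degree n x * (f (diag_exp n x))\<^sup>2"
proof -
  have "dmul n f f x = (\<Sum>a\<in>MonA n. \<Sum>b\<in>MonA n. coprod_mon n x (pairmon a b) * f a * f b)"
    unfolding dmul_def using x by simp
  also have "\<dots> = (\<Sum>a\<in>MonA n. tdiag (coprod_mon n x) a * (f a)\<^sup>2)"
    by (subst sum_sum_eq_sum_diagonal)
      (simp_all add: finite_MonA coprod_mon_pairmon_swap coef_add_self ac_simps tdiag_def
        pairmon_self power2_eq_square)
  also have "\<dots> = (\<Sum>a\<in>MonA n. if a = diag_exp n x then vn ^ total_degree n x * (f a)\<^sup>2 else 0)"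
    unfolding tdiag_coprod_mon tsmul_def tmonom_def MonA_def[symmetric] by (rule sum.cong) auto
  also have "\<dots> = vn ^ total_degree n x * (f (diag_exp n x))\<^sup>2"
    using dual_eq_0[OF f] by (simp add: finite_MonA)
  finally show ?thesis .
qed

section \<open>Degrees\<close>

definition weighted_degree :: "nat \<Rightarrow> (nat \<Rightarrow> nat) \<Rightarrow> nat" where
  "weighted_degree n y = (\<Sum>i\<in>gens n. y i * i)"

definition top_exp :: "nat \<Rightarrow> nat \<Rightarrow> nat" where
  "top_exp n = (\<lambda>i. if i = 2 ^ n - 1 then 1 else 0)"

lemma odd_top: "n \<ge> 1 \<Longrightarrow> odd (2 ^ n - 1 :: nat)"
  by (cases n) auto

lemma top_in_gens: "n \<ge> 1 \<Longrightarrow> 2 ^ n - 1 \<in> gens n"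
  unfolding gens_def using odd_top by auto

lemma gens_le_top: "j \<in> gens n \<Longrightarrow> j \<le> 2 ^ n - 1"
  unfolding gens_def by auto

lemma gens_pos: "j \<in> gens n \<Longrightarrow> 0 < j"
  unfolding gens_def by (cases j) auto

lemma two_mult_sigma:
  assumes j: "j \<in> gens n"
  shows "2 * sigma n j = 2 ^ n - 1 + j"
proof -
  have "n \<ge> 1" using j unfolding gens_def by (cases n) auto
  then obtain a where a: "(2::nat) ^ n - 1 = 2 * a + 1" using odd_top by (blast elim: oddE)
  obtain b where b: "j = 2 * b + 1" using j unfolding gens_def by (blast elim: oddE)
  have "b \<le> a" using gens_le_top[OF j] a b by simp
  then show ?thesis unfolding sigma_def ang_def a b by (simp flip: diff_mult_distrib2)
qed

lemma weighted_degree_e_exp: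
  assumes "1 \<le> m" and "m \<le> 2 ^ n - 1"
  shows "weighted_degree n (e_exp m) = m"
proof -
  let ?j = "m div 2 ^ multiplicity 2 m"
  have "odd ?j" using assms(1) multiplicity_decompose[of m 2] by simp
  moreover have "?j < 2 ^ n"
    using div_le_dividend[of m "2 ^ multiplicity 2 m"] assms(2) zero_less_power[of "2::nat" n] by linarith
  ultimately have "?j \<in> gens n" unfolding gens_def by simp
  moreover have "weighted_degree n (e_exp m) = (\<Sum>i\<in>gens n. if i = ?j then 2 ^ multiplicity 2 m * ?j else 0)"
    unfolding weighted_degree_def e_exp_def by (rule sum.cong) auto
  ultimately have "weighted_degree n (e_exp m) = 2 ^ multiplicity 2 m * ?j"
    by (simp add: finite_gens)
  also have "\<dots> = m" using multiplicity_dvd[of 2 m] by simp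
  finally show ?thesis .
qed

lemma two_mult_weighted_degree_diag_exp:
  "2 * weighted_degree n (diag_exp n x) = (2 ^ n - 1) * total_degree n x + weighted_degree n x"
proof -
  have sigma: "weighted_degree n (e_exp (sigma n j)) = sigma n j" if "j \<in> gens n" for j
    using two_mult_sigma[OF that] gens_le_top[OF that] gens_pos[OF that]
    by (intro weighted_degree_e_exp) linarith+
  have "weighted_degree n (diag_exp n x) = (\<Sum>j\<in>gens n. x j * weighted_degree n (e_exp (sigma n j)))"
    unfolding weighted_degree_def diag_exp_def sum_distrib_left sum_distrib_right
    by (subst sum.swap) (simp add: mult.assoc)
  also have "\<dots> = (\<Sum>j\<in>gens n. x j * sigma n j)"
    by (rule sum.cong) (simp_all add: sigma)
  finally have "2 * weighted_degree n (diag_exp n x) = (\<Sum>j\<in>gens n. x j * (2 * sigma n j))"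
    by (simp add: sum_distrib_left mult.left_commute)
  also have "\<dots> = (\<Sum>j\<in>gens n. (2 ^ n - 1) * x j + x j * j)"
    by (rule sum.cong) (simp_all add: two_mult_sigma algebra_simps)
  finally show ?thesis
    unfolding total_degree_def weighted_degree_def sum.distrib sum_distrib_left .
qed

lemma MonA_iff: "x \<in> MonA n \<longleftrightarrow> (\<forall>i\<in>gens n. x i < bnd n i) \<and> (\<forall>i. i \<notin> gens n \<longrightarrow> x i = 0)"
  unfolding MonA_def monset_def by simp

lemma bnd_top: assumes "n \<ge> 1" shows "bnd n (2 ^ n - 1) = 2"
proof -
  define N :: nat where "N = 2 ^ n - 1"
  have "(2::nat) ^ (n + 1) - 2 = 2 * N" unfolding N_def by (simp add: diff_mult_distrib2)
  moreover have "N > 0" unfolding N_def using one_less_power[of "2::nat" n] assms by simp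
  ultimately have "real (2 ^ (n + 1) - 2) / real N = 2" by simp
  then have "kexp n N = 1" unfolding kexp_def by simp
  then have "kexp n (2 ^ n - 1) = 1" unfolding N_def .
  then show ?thesis unfolding bnd_def by simp
qed

lemma zero_in_MonA: "(\<lambda>_. 0) \<in> MonA n"
  unfolding MonA_iff bnd_def by simp

lemma top_exp_in_MonA: "n \<ge> 1 \<Longrightarrow> top_exp n \<in> MonA n"
  unfolding MonA_iff top_exp_def using top_in_gens bnd_top by (auto simp: bnd_def)

lemma top_exp_neq_zero: "top_exp n \<noteq> (\<lambda>_. 0)"
  unfolding top_exp_def by (metis one_neq_zero)

lemma total_degree_zero: "total_degree n (\<lambda>_. 0) = 0"
  unfolding total_degree_def by simp

lemma diag_exp_zero: "diag_exp n (\<lambda>_. 0) = (\<lambda>_. 0)"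
  unfolding diag_exp_def by simp

lemma sum_gens_top_exp:
  assumes "n \<ge> 1" shows "(\<Sum>j\<in>gens n. top_exp n j * g j) = g (2 ^ n - 1)"
proof -
  have "(\<Sum>j\<in>gens n. top_exp n j * g j) = (\<Sum>j\<in>gens n. if j = 2 ^ n - 1 then g j else 0)"
    by (rule sum.cong) (simp_all add: top_exp_def)
  then show ?thesis using top_in_gens[OF assms] by (simp add: finite_gens)
qed

lemma total_degree_top_exp: "n \<ge> 1 \<Longrightarrow> total_degree n (top_exp n) = 1"
  unfolding total_degree_def using sum_gens_top_exp[of n "\<lambda>_. 1"] by simp

lemma diag_exp_top_exp: "n \<ge> 1 \<Longrightarrow> diag_exp n (top_exp n) = top_exp n"
proof -
  assume n: "n \<ge> 1"
  have "multiplicity 2 (2 ^ n - 1 :: nat) = 0"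
    using odd_top[OF n] by (simp add: not_dvd_imp_multiplicity_0)
  then have "e_exp (2 ^ n - 1) = top_exp n"
    unfolding e_exp_def top_exp_def by (simp only: power_0 div_by_1)
  then show ?thesis
    unfolding diag_exp_def sum_gens_top_exp[OF n] by (simp add: sigma_def ang_def)
qed

lemma weighted_degree_top_exp: "n \<ge> 1 \<Longrightarrow> weighted_degree n (top_exp n) = 2 ^ n - 1"
  unfolding weighted_degree_def using sum_gens_top_exp[of n "\<lambda>j. j"] by simp

lemma exists_lower_gen:
  assumes n: "n \<ge> 1" and x: "x \<in> MonA n" and "x \<noteq> (\<lambda>_. 0)" and "x \<noteq> top_exp n"
  obtains j where "j \<in> gens n" and "j < 2 ^ n - 1" and "0 < x j"
proof -
  have "\<exists>j\<in>gens n. j < 2 ^ n - 1 \<and> 0 < x j"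
  proof (rule ccontr)
    assume none: "\<not> ?thesis"
    have off_top: "x i = 0" if "i \<noteq> 2 ^ n - 1" for i
    proof (cases "i \<in> gens n")
      case True
      then have "i < 2 ^ n - 1" using gens_le_top[OF True] that by linarith
      then show ?thesis using none True by auto
    qed (use x in \<open>simp add: MonA_iff\<close>)
    have "x (2 ^ n - 1) < 2"
      using x top_in_gens[OF n] bnd_top[OF n] unfolding MonA_iff by auto
    then consider "x (2 ^ n - 1) = 0" | "x (2 ^ n - 1) = 1" by linarith
    then have "x = (\<lambda>_. 0) \<or> x = top_exp n"
    proof cases
      case 1
      have "x = (\<lambda>_. 0)"
      proof
        fix i show "x i = 0" using 1 off_top by (cases "i = 2 ^ n - 1") simp_all
      qed
      then show ?thesis ..
    next
      case 2
      have "x = top_exp n"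
      proof
        fix i show "x i = top_exp n i"
          using 2 off_top unfolding top_exp_def by (cases "i = 2 ^ n - 1") simp_all
      qed
      then show ?thesis ..
    qed
    with assms(3,4) show False by blast
  qed
  then show thesis using that by blast
qed

lemma weighted_degree_bounds:
  assumes "n \<ge> 1" and "x \<in> MonA n" and "x \<noteq> (\<lambda>_. 0)" and "x \<noteq> top_exp n"
  shows "0 < weighted_degree n x" and "weighted_degree n x < (2 ^ n - 1) * total_degree n x"
proof -
  obtain j0 where j0: "j0 \<in> gens n" "j0 < 2 ^ n - 1" "0 < x j0"
    using exists_lower_gen[OF assms] .
  have "x j0 * j0 \<le> weighted_degree n x"
    unfolding weighted_degree_def by (rule member_le_sum[OF j0(1)]) (simp_all add: finite_gens)
  moreover have "0 < x j0 * j0" using j0(3) gens_pos[OF j0(1)] by simp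
  ultimately show "0 < weighted_degree n x" by linarith
  have "weighted_degree n x < (\<Sum>j\<in>gens n. x j * (2 ^ n - 1))"
    unfolding weighted_degree_def
  proof (rule sum_strict_mono_ex1[OF finite_gens])
    show "\<forall>j\<in>gens n. x j * j \<le> x j * (2 ^ n - 1)" using gens_le_top by simp
    show "\<exists>j\<in>gens n. x j * j < x j * (2 ^ n - 1)" using j0 by (intro bexI[of _ j0]) simp_all
  qed
  then show "weighted_degree n x < (2 ^ n - 1) * total_degree n x"
    unfolding total_degree_def sum_distrib_left by (simp add: mult.commute)
qed

lemma weighted_degree_less_diag_exp:
  assumes n: "n \<ge> 1" and "x \<in> MonA n" and "x \<noteq> (\<lambda>_. 0)" and "x \<noteq> top_exp n"
  shows "weighted_degree n x < weighted_degree n (diag_exp n x)"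
    and "diag_exp n x \<noteq> (\<lambda>_. 0)" and "diag_exp n x \<noteq> top_exp n"
proof -
  define N :: nat where "N = 2 ^ n - 1"
  define w where "w = total_degree n x"
  define D where "D = weighted_degree n x"
  have pos: "0 < D" and lt: "D < N * w"
    using weighted_degree_bounds[OF assms] unfolding N_def w_def D_def by auto
  have two: "2 * weighted_degree n (diag_exp n x) = N * w + D"
    unfolding N_def w_def D_def by (rule two_mult_weighted_degree_diag_exp)
  show less: "weighted_degree n x < weighted_degree n (diag_exp n x)"
    using two lt unfolding D_def by linarith
  then show "diag_exp n x \<noteq> (\<lambda>_. 0)" by (auto simp: weighted_degree_def)
  show "diag_exp n x \<noteq> top_exp n"
  proof
    assume "diag_exp n x = top_exp n"
    then have e: "2 * N = N * w + D" using two weighted_degree_top_exp[OF n] unfolding N_def by simp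
    show False
    proof (cases "w \<le> 1")
      case True
      then have "N * w \<le> N" using mult_le_mono2[of w 1 N] by simp
      then show False using e lt by linarith
    next
      case False
      then have "N * 2 \<le> N * w" using mult_le_mono2[of 2 w N] by simp
      then show False using e pos by linarith
    qed
  qed
qed

section \<open>Idempotents of the dual algebra\<close>

lemma weighted_degree_le_bound: "x \<in> MonA n \<Longrightarrow> weighted_degree n x \<le> (\<Sum>i\<in>gens n. bnd n i * i)"
  unfolding weighted_degree_def MonA_iff by (intro sum_mono mult_le_mono1) (simp add: less_imp_le)

text \<open>Descending induction on the degree: \<open>f(e\<^sup>x) = v\<^sub>n\<^sup>k f(e\<^sup>y)\<^sup>2\<close> with \<open>y = diag_exp n x\<close>
  of strictly larger degree.\<close>

lemma idempotent_vanishes: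
  assumes n: "n \<ge> 1" and f: "f \<in> dual n" and idem: "dmul n f f = f"
  shows "x \<noteq> (\<lambda>_. 0) \<Longrightarrow> x \<noteq> top_exp n \<Longrightarrow> f x = 0"
proof (induction "(\<Sum>i\<in>gens n. bnd n i * i) - weighted_degree n x" arbitrary: x rule: less_induct)
  case less
  show ?case
  proof (cases "x \<in> MonA n")
    case x: True
    note diag = weighted_degree_less_diag_exp[OF n x less.prems]
    have "f (diag_exp n x) = 0"
    proof (cases "diag_exp n x \<in> MonA n")
      case True
      then have "(\<Sum>i\<in>gens n. bnd n i * i) - weighted_degree n (diag_exp n x)
          < (\<Sum>i\<in>gens n. bnd n i * i) - weighted_degree n x"
        using diag(1) weighted_degree_le_bound[OF True] by linarith
      then show ?thesis using less.hyps diag(2,3) by blast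
    qed (rule dual_eq_0[OF f])
    then show ?thesis using dmul_self_apply[OF f x] idem by simp
  qed (rule dual_eq_0[OF f])
qed

definition dual_comb :: "nat \<Rightarrow> coef \<Rightarrow> coef \<Rightarrow> (nat \<Rightarrow> nat) \<Rightarrow> coef" where
  "dual_comb n a b = (\<lambda>t. (if t = (\<lambda>_. 0) then a else 0) + (if t = top_exp n then b else 0))"

lemma dual_comb_apply:
  "dual_comb n a b (\<lambda>_. 0) = a"
  "dual_comb n a b (top_exp n) = b"
  "t \<noteq> (\<lambda>_. 0) \<Longrightarrow> t \<noteq> top_exp n \<Longrightarrow> dual_comb n a b t = 0"
  unfolding dual_comb_def using top_exp_neq_zero[of n] by simp_all

lemma dual_comb_eq_iff: "dual_comb n a b = dual_comb n c d \<longleftrightarrow> a = c \<and> b = d"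
proof
  assume h: "dual_comb n a b = dual_comb n c d"
  show "a = c \<and> b = d"
    using fun_cong[OF h, of "\<lambda>_. 0"] fun_cong[OF h, of "top_exp n"] by (simp add: dual_comb_apply)
qed simp

lemma dual_comb_in_dual:
  assumes "n \<ge> 1" shows "dual_comb n a b \<in> dual n"
  unfolding dual_def
proof (intro CollectI allI impI)
  fix t assume "t \<notin> MonA n"
  then have "t \<noteq> (\<lambda>_. 0)" "t \<noteq> top_exp n" using zero_in_MonA top_exp_in_MonA[OF assms] by auto
  then show "dual_comb n a b t = 0" by (rule dual_comb_apply(3))
qed

lemma idempotent_eq_dual_comb:
  assumes "n \<ge> 1" and "f \<in> dual n" and "dmul n f f = f"
  shows "f = dual_comb n (f (\<lambda>_. 0)) (f (top_exp n))"
proof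
  fix t
  show "f t = dual_comb n (f (\<lambda>_. 0)) (f (top_exp n)) t"
    by (cases "t = (\<lambda>_. 0) \<or> t = top_exp n")
      (auto simp: dual_comb_apply idempotent_vanishes[OF assms])
qed

lemma dmul_dual_comb:
  assumes n: "n \<ge> 1"
  shows "dmul n (dual_comb n a b) (dual_comb n a b) = dual_comb n (a\<^sup>2) (vn * b\<^sup>2)"
proof
  fix x
  show "dmul n (dual_comb n a b) (dual_comb n a b) x = dual_comb n (a\<^sup>2) (vn * b\<^sup>2) x"
  proof (cases "x \<in> MonA n")
    case x: True
    note square = dmul_self_apply[OF dual_comb_in_dual[OF n] x]
    consider "x = (\<lambda>_. 0)" | "x = top_exp n" | "x \<noteq> (\<lambda>_. 0)" "x \<noteq> top_exp n" by blast
    then show ?thesis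
    proof cases
      case 1
      then show ?thesis using square by (simp add: diag_exp_zero total_degree_zero dual_comb_apply)
    next
      case 2
      then show ?thesis using square n by (simp add: diag_exp_top_exp total_degree_top_exp dual_comb_apply)
    next
      case 3
      then show ?thesis
        using square weighted_degree_less_diag_exp(2,3)[OF n x 3] by (simp add: dual_comb_apply)
    qed
  next
    case False
    then have "x \<noteq> (\<lambda>_. 0)" "x \<noteq> top_exp n" using zero_in_MonA top_exp_in_MonA[OF n] by auto
    with False show ?thesis unfolding dmul_def by (simp add: dual_comb_apply)
  qed
qed

lemma idempotent_iff_dual_comb:
  assumes "n \<ge> 1" and "f \<in> dual n"
  shows "dmul n f f = f \<longleftrightarrow> (\<exists>a b. f = dual_comb n a b \<and> (a = 0 \<or> a = 1) \<and> (b = 0 \<or> b = vn_inv))"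
proof
  assume idem: "dmul n f f = f"
  define a b where "a = f (\<lambda>_. 0)" and "b = f (top_exp n)"
  have f: "f = dual_comb n a b" unfolding a_def b_def by (rule idempotent_eq_dual_comb[OF assms idem])
  then have "dual_comb n (a\<^sup>2) (vn * b\<^sup>2) = dual_comb n a b"
    using idem dmul_dual_comb[OF assms(1)] by simp
  then show "\<exists>a b. f = dual_comb n a b \<and> (a = 0 \<or> a = 1) \<and> (b = 0 \<or> b = vn_inv)"
    using f by (auto simp: dual_comb_eq_iff coef_square_eq_self_iff coef_vn_square_eq_self_iff)
next
  assume "\<exists>a b. f = dual_comb n a b \<and> (a = 0 \<or> a = 1) \<and> (b = 0 \<or> b = vn_inv)"
  then show "dmul n f f = f"
    by (auto simp: dmul_dual_comb[OF assms(1)] dual_comb_eq_iff coef_square_eq_self_iff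
        coef_vn_square_eq_self_iff)
qed

theorem proposition5p6:
  fixes n :: nat and f :: "(nat \<Rightarrow> nat) \<Rightarrow> coef"
  assumes "n \<ge> 1" and "f \<in> dual n"
  shows "(dmul n f f = f \<and> f \<noteq> (\<lambda>_. 0) \<and> f \<noteq> dunit n) \<longleftrightarrow>
         (f = (\<lambda>t. vn_inv * alpha n t) \<or> f = (\<lambda>t. dunit n t - vn_inv * alpha n t))"
proof -
  have alpha: "alpha n t = (if t = top_exp n then 1 else 0)" for t
    unfolding alpha_def top_exp_def by simp
  have "(\<lambda>_. 0) = dual_comb n 0 0" and "dunit n = dual_comb n 1 0"
    and "(\<lambda>t. vn_inv * alpha n t) = dual_comb n 0 vn_inv"
    and "(\<lambda>t. dunit n t - vn_inv * alpha n t) = dual_comb n 1 vn_inv"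
    unfolding dual_comb_def dunit_def alpha coef_diff_eq_add by (auto simp: fun_eq_iff)
  then show ?thesis
    unfolding idempotent_iff_dual_comb[OF assms]
    using vn_inv_neq_0 by (auto simp: dual_comb_eq_iff)
qed

end
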